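(* For every integer $N\ge 0$, let $T(N)$ be the number of tilings of a $3\times 4\times n$ box, $n=N/3$, by $N$ bricks of size $1\times 2\times 2$ (and $0$ if $3\nmid N$). Then, as formal power series, \[ \sum_{N\ge 0} T(N)\,z^N=\frac{(1-2z^6)(1-24z^6+122z^{12}-120z^{18})}{(1-z^6)(1-54z^6+646z^{12}-2540z^{18}+2640z^{24})}. \]
   Context: A tiling of a $k\times m\times n$ box (made of $kmn$ unit cubes) by $a\times b\times c$ bricks is a partition of the box into non-overlapping axis-parallel boxes with integer corner coordinates, each congruent (by an axis-permuting placement) to the $a\times b\times c$ brick; all orientations are allowed. Tilings related by symmetries of the box are counted as distinct. The empty tiling counts once for $N=0$. *)

theory Defs
  imports "HOL-Computational_Algebra.Formal_Power_Series"
begin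

type_synonym cell = "nat \<times> nat \<times> nat"

definition cuboid :: "nat \<Rightarrow> nat \<Rightarrow> nat \<Rightarrow> nat \<Rightarrow> nat \<Rightarrow> nat \<Rightarrow> cell set" where
  "cuboid x0 y0 z0 p q r =
     {(x, y, z). x0 \<le> x \<and> x < x0 + p \<and> y0 \<le> y \<and> y < y0 + q \<and> z0 \<le> z \<and> z < z0 + r}"

definition is_brick :: "nat \<Rightarrow> nat \<Rightarrow> nat \<Rightarrow> cell set \<Rightarrow> bool" where
  "is_brick a b c B \<longleftrightarrow>
     (\<exists>x0 y0 z0 p q r.
        (p, q, r) \<in> {(a, b, c), (a, c, b), (b, a, c), (b, c, a), (c, a, b), (c, b, a)} \<and>
        B = cuboid x0 y0 z0 p q r)"

definition tilings :: "nat \<Rightarrow> nat \<Rightarrow> nat \<Rightarrow> nat \<Rightarrow> nat \<Rightarrow> nat \<Rightarrow> cell set set set" where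
  "tilings a b c k m n =
     {P. (\<forall>B\<in>P. is_brick a b c B) \<and>
         (\<forall>B\<in>P. \<forall>C\<in>P. B \<noteq> C \<longrightarrow> B \<inter> C = {}) \<and>
         \<Union>P = cuboid 0 0 0 k m n}"

definition T :: "nat \<Rightarrow> nat" where
  "T N = (if 3 dvd N then card {P \<in> tilings 1 2 2 3 4 (N div 3). card P = N} else 0)"

end

theory Submission
  imports Defs
begin

text \<open>Build the box from the top down. Once the layers above height h are covered, all that matters
  for the rest is the profile: the set of cells of layer h - 1 already covered by bricks hanging down
  from layer h. Covering the first free cell of the top layer in each of the possible ways turns the
  profile counts into a linear recursion in h, with a 26 x 26 transfer matrix M on the profiles
  reachable from the empty one; the number c(h) of tilings of the 3 x 4 x h box is the first entry
  of M^h applied to the counts at height 0. Computing the first rows of M^2, ..., M^10 shows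
  c(h + 10) - 55 c(h + 8) + 700 c(h + 6) - 3186 c(h + 4) + 5180 c(h + 2) - 2640 c(h) = 0, and with
  the values c(0), ..., c(9) this says that the denominator of the claimed rational function, expanded
  to 1 - 55 z^6 + ... - 2640 z^30, times the generating function is its numerator.\<close>

section \<open>Tilings of a region\<close>

definition region_tilings :: "nat \<Rightarrow> nat \<Rightarrow> nat \<Rightarrow> cell set \<Rightarrow> cell set set set" where
  "region_tilings a b c R =
     {P. (\<forall>B\<in>P. is_brick a b c B) \<and> (\<forall>B\<in>P. \<forall>C\<in>P. B \<noteq> C \<longrightarrow> B \<inter> C = {}) \<and> \<Union>P = R}"

lemma tilings_eq_region_tilings: "tilings a b c k m n = region_tilings a b c (cuboid 0 0 0 k m n)"
  unfolding tilings_def region_tilings_def ..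

lemma finite_region_tilings: "finite R \<Longrightarrow> finite (region_tilings a b c R)"
  by (rule finite_subset[of _ "Pow (Pow R)"]) (auto simp: region_tilings_def)

lemma cuboid_eq_product: "cuboid x0 y0 z0 p q r = {x0..<x0+p} \<times> {y0..<y0+q} \<times> {z0..<z0+r}"
  by (auto simp: cuboid_def)

lemma finite_card_brick: "is_brick a b c B \<Longrightarrow> finite B \<and> card B = a * b * c"
  unfolding is_brick_def by (auto simp: cuboid_eq_product card_cartesian_product)

lemma region_tilings_empty:
  assumes "0 < a" "0 < b" "0 < c"
  shows "region_tilings a b c {} = {{}}"
proof -
  have "B \<noteq> {}" if "is_brick a b c B" for B
    using finite_card_brick[OF that] assms by auto
  then show ?thesis unfolding region_tilings_def by auto
qed

lemma card_region_eq_card_tiling: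
  assumes "finite R" "P \<in> region_tilings a b c R"
  shows "card R = a * b * c * card P"
proof -
  have bricks: "\<forall>B\<in>P. is_brick a b c B" and union: "\<Union>P = R"
    and "pairwise disjnt P"
    using assms(2) unfolding region_tilings_def pairwise_def disjnt_def by auto
  then have "card R = sum card P"
    by (metis card_Union_disjoint finite_card_brick)
  also have "\<dots> = sum (\<lambda>_. a * b * c) P"
    using bricks finite_card_brick by (intro sum.cong) auto
  finally show ?thesis by simp
qed

lemma insert_brick_region_tilings:
  assumes "Q \<in> region_tilings a b c (R - B)" "is_brick a b c B" "B \<subseteq> R"
  shows "insert B Q \<in> region_tilings a b c R"
proof -
  have bricks: "\<forall>C\<in>Q. is_brick a b c C"
    and disj: "\<forall>C\<in>Q. \<forall>D\<in>Q. C \<noteq> D \<longrightarrow> C \<inter> D = {}"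
    and union: "\<Union>Q = R - B"
    using assms(1) unfolding region_tilings_def by auto
  have "\<forall>C\<in>Q. B \<inter> C = {}" using union by blast
  then have "\<forall>C\<in>insert B Q. \<forall>D\<in>insert B Q. C \<noteq> D \<longrightarrow> C \<inter> D = {}"
    using disj by blast
  moreover have "\<Union>(insert B Q) = R" using union assms(3) by auto
  ultimately show ?thesis using bricks assms(2) unfolding region_tilings_def by simp
qed

lemma remove_brick_region_tilings:
  assumes "P \<in> region_tilings a b c R" "B \<in> P"
  shows "P - {B} \<in> region_tilings a b c (R - B)"
proof -
  have bricks: "\<forall>C\<in>P. is_brick a b c C"
    and disj: "\<forall>C\<in>P. \<forall>D\<in>P. C \<noteq> D \<longrightarrow> C \<inter> D = {}"
    and union: "\<Union>P = R"
    using assms(1) unfolding region_tilings_def by auto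
  have "\<Union>(P - {B}) = R - B" using union disj assms(2) by blast
  with bricks disj show ?thesis unfolding region_tilings_def by simp
qed

text \<open>Each tiling has exactly one brick through v, and removing it is a bijection onto the tilings
  of the rest of the region.\<close>
lemma card_region_tilings_split:
  assumes "finite R" "v \<in> R"
  shows "card (region_tilings a b c R) =
    (\<Sum>B \<in> {B. is_brick a b c B \<and> v \<in> B \<and> B \<subseteq> R}. card (region_tilings a b c (R - B)))"
proof -
  let ?til = "region_tilings a b c"
  let ?K = "{B. is_brick a b c B \<and> v \<in> B \<and> B \<subseteq> R}"
  have "finite ?K" by (rule finite_subset[of _ "Pow R"]) (use assms(1) in auto)
  have cover: "?til R = (\<Union>B\<in>?K. {P \<in> ?til R. B \<in> P})"
  proof (intro equalityI subsetI)
    fix P assume P: "P \<in> ?til R"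
    then obtain B where "B \<in> P" "v \<in> B" using assms(2) unfolding region_tilings_def by auto
    with P show "P \<in> (\<Union>B\<in>?K. {P \<in> ?til R. B \<in> P})" unfolding region_tilings_def by auto
  qed auto
  have disjoint: "{P \<in> ?til R. B1 \<in> P} \<inter> {P \<in> ?til R. B2 \<in> P} = {}"
    if "B1 \<in> ?K" "B2 \<in> ?K" "B1 \<noteq> B2" for B1 B2
    using that unfolding region_tilings_def by blast
  have remove: "card {P \<in> ?til R. B \<in> P} = card (?til (R - B))" if B: "B \<in> ?K" for B
  proof (rule bij_betw_same_card[of "\<lambda>P. P - {B}"], rule bij_betw_byWitness[of _ "insert B"])
    show "\<forall>Q\<in>?til (R - B). insert B Q - {B} = Q"
    proof
      fix Q assume "Q \<in> ?til (R - B)"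
      then have "B \<notin> Q" using B unfolding region_tilings_def by blast
      then show "insert B Q - {B} = Q" by simp
    qed
    show "(\<lambda>P. P - {B}) ` {P \<in> ?til R. B \<in> P} \<subseteq> ?til (R - B)"
      using remove_brick_region_tilings by blast
    show "insert B ` ?til (R - B) \<subseteq> {P \<in> ?til R. B \<in> P}"
      using insert_brick_region_tilings B by blast
  qed auto
  have "card (?til R) = (\<Sum>B\<in>?K. card {P \<in> ?til R. B \<in> P})"
    by (subst cover, rule card_UN_disjoint)
      (use \<open>finite ?K\<close> finite_region_tilings[OF assms(1)] disjoint in auto)
  then show ?thesis using remove by simp
qed

section \<open>Filling the 3 x 4 box layer by layer\<close>

definition corner_bricks :: "nat \<Rightarrow> nat \<Rightarrow> nat \<Rightarrow> cell set set" where
  "corner_bricks x y z = {cuboid x y z 2 2 1} \<union>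
     (if 0 < z then {cuboid x y (z - 1) 2 1 2, cuboid x y (z - 1) 1 2 2} else {})"

lemma brick_122_cuboid:
  "(p, q, r) \<in> {(1, 2, 2), (2, 1, 2), (2, 2, 1)} \<Longrightarrow> is_brick 1 2 2 (cuboid x y z p q r)"
  unfolding is_brick_def by blast

text \<open>If (x0, y0, z0) is the first cell of R in the order that reads the top layer first, row by row,
  then a 1 x 2 x 2 brick through it can only extend forwards in x and y and downwards in z.\<close>
lemma bricks_through_corner:
  assumes first: "\<forall>(x, y, z)\<in>R. z < z0 \<or> (z = z0 \<and> (y0 < y \<or> (y0 = y \<and> x0 \<le> x)))"
  shows "{B. is_brick 1 2 2 B \<and> (x0, y0, z0) \<in> B \<and> B \<subseteq> R} = {B \<in> corner_bricks x0 y0 z0. B \<subseteq> R}"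
proof (intro equalityI subsetI)
  fix B assume "B \<in> {B. is_brick 1 2 2 B \<and> (x0, y0, z0) \<in> B \<and> B \<subseteq> R}"
  then have B: "is_brick 1 2 2 B" "(x0, y0, z0) \<in> B" "B \<subseteq> R" by auto
  then obtain a b d p q r where "(p, q, r) \<in> {(1, 2, 2), (1, 2, 2), (2, 1, 2), (2, 2, 1), (2, 1, 2), (2, 2, 1)}"
    and B_eq: "B = cuboid a b d p q r"
    unfolding is_brick_def by blast
  then have pqr: "(p, q, r) \<in> {(1, 2, 2), (2, 1, 2), (2, 2, 1)}" by auto
  have inside: "a \<le> x0" "x0 < a + p" "b \<le> y0" "y0 < b + q" "d \<le> z0" "z0 < d + r"
    using B(2) B_eq by (auto simp: cuboid_def)
  have "(a, b, d + r - 1) \<in> R" using B(3) B_eq pqr by (auto simp: cuboid_def)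
  with first inside have "d + r - 1 = z0" "a = x0" "b = y0" by auto
  then show "B \<in> {B \<in> corner_bricks x0 y0 z0. B \<subseteq> R}"
    using pqr inside B(3) unfolding B_eq corner_bricks_def by auto
next
  fix B assume B: "B \<in> {B \<in> corner_bricks x0 y0 z0. B \<subseteq> R}"
  then consider "B = cuboid x0 y0 z0 2 2 1" | "0 < z0" "B = cuboid x0 y0 (z0 - 1) 2 1 2"
    | "0 < z0" "B = cuboid x0 y0 (z0 - 1) 1 2 2"
    unfolding corner_bricks_def by (auto split: if_splits)
  then have "is_brick 1 2 2 B \<and> (x0, y0, z0) \<in> B"
  proof cases
    case 1 then show ?thesis using brick_122_cuboid[of 2 2 1 x0 y0 z0] by (simp add: cuboid_def)
  next
    case 2 then show ?thesis using brick_122_cuboid[of 2 1 2 x0 y0 "z0 - 1"] by (simp add: cuboid_def)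
  next
    case 3 then show ?thesis using brick_122_cuboid[of 1 2 2 x0 y0 "z0 - 1"] by (simp add: cuboid_def)
  qed
  with B show "B \<in> {B. is_brick 1 2 2 B \<and> (x0, y0, z0) \<in> B \<and> B \<subseteq> R}" by simp
qed

definition cell_index :: "nat \<Rightarrow> nat \<Rightarrow> nat" where
  "cell_index x y = 3 * y + x"

lemma cell_index_eq_iff:
  "x < 3 \<Longrightarrow> x' < 3 \<Longrightarrow> cell_index x y = cell_index x' y' \<longleftrightarrow> x = x' \<and> y = y'"
  unfolding cell_index_def by presburger

lemma cell_index_less: "x < 3 \<Longrightarrow> y < 4 \<Longrightarrow> cell_index x y < 12"
  unfolding cell_index_def by simp

text \<open>A set S of cell indices (a profile) lists the cells of the top layer h - 1 of the 3 x 4 x h box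
  that are already covered from above; layered_box h U L is the intermediate state in which the
  cells U of the new top layer h and the cells L of layer h - 1 are covered.\<close>
definition profile_box :: "nat \<Rightarrow> nat set \<Rightarrow> cell set" where
  "profile_box h S = {(x, y, z). x < 3 \<and> y < 4 \<and> z < h \<and> (Suc z = h \<longrightarrow> cell_index x y \<notin> S)}"

definition layered_box :: "nat \<Rightarrow> nat set \<Rightarrow> nat set \<Rightarrow> cell set" where
  "layered_box h U L = {(x, y, z). x < 3 \<and> y < 4 \<and> z \<le> h \<and>
     (z = h \<longrightarrow> cell_index x y \<notin> U) \<and> (Suc z = h \<longrightarrow> cell_index x y \<notin> L)}"

text \<open>For h = 0 the layer h - 1 lies below the floor: removed cells there stand for bricks
  sticking out of the box, so these configurations are given count 0.\<close>
definition profile_count :: "nat \<Rightarrow> nat set \<Rightarrow> nat" where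
  "profile_count h S =
     (if h = 0 \<and> S \<noteq> {} then 0 else card (region_tilings 1 2 2 (profile_box h S)))"

definition layered_count :: "nat \<Rightarrow> nat set \<Rightarrow> nat set \<Rightarrow> nat" where
  "layered_count h U L =
     (if h = 0 \<and> L \<noteq> {} then 0 else card (region_tilings 1 2 2 (layered_box h U L)))"

lemma finite_layered_box: "finite (layered_box h U L)"
  by (rule finite_subset[of _ "{..<3} \<times> {..<4} \<times> {..h}"]) (auto simp: layered_box_def)

lemma profile_count_Suc: "profile_count (Suc h) S = layered_count h S {}"
proof -
  have "profile_box (Suc h) S = layered_box h S {}"
    unfolding profile_box_def layered_box_def by auto
  then show ?thesis unfolding profile_count_def layered_count_def by simp
qed

lemma layered_count_full_layer: "{0..<12} \<subseteq> U \<Longrightarrow> layered_count h U L = profile_count h L"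
proof -
  assume U: "{0..<12} \<subseteq> U"
  show ?thesis
  proof (cases "h = 0 \<and> L \<noteq> {}")
    case True then show ?thesis unfolding layered_count_def profile_count_def by simp
  next
    case False
    have "(x, y, z) \<in> layered_box h U L \<longleftrightarrow> (x, y, z) \<in> profile_box h L" for x y z
      using U cell_index_less[of x y] unfolding layered_box_def profile_box_def
      by (cases "z = h") auto
    then have "layered_box h U L = profile_box h L" by auto
    with False show ?thesis
      unfolding layered_count_def profile_count_def by auto
  qed
qed

definition count_with_brick :: "cell set \<Rightarrow> cell set \<Rightarrow> nat" where
  "count_with_brick R B = (if B \<subseteq> R then card (region_tilings 1 2 2 (R - B)) else 0)"

lemma card_region_tilings_corner:
  assumes "finite R" "(x0, y0, z0) \<in> R"
    and "\<forall>(x, y, z)\<in>R. z < z0 \<or> (z = z0 \<and> (y0 < y \<or> (y0 = y \<and> x0 \<le> x)))"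
  shows "card (region_tilings 1 2 2 R) = (\<Sum>B \<in> corner_bricks x0 y0 z0. count_with_brick R B)"
proof -
  have "finite (corner_bricks x0 y0 z0)" unfolding corner_bricks_def by simp
  then show ?thesis
    unfolding card_region_tilings_split[OF assms(1,2)] bricks_through_corner[OF assms(3)]
      count_with_brick_def
    by (rule sum.inter_filter)
qed

lemma cuboid_221: "cuboid x y z 2 2 1 = {(x, y, z), (Suc x, y, z), (x, Suc y, z), (Suc x, Suc y, z)}"
  by (auto simp: cuboid_def numeral_2_eq_2 less_Suc_eq)

lemma cuboid_212: "cuboid x y z 2 1 2 = {(x, y, z), (Suc x, y, z), (x, y, Suc z), (Suc x, y, Suc z)}"
  by (auto simp: cuboid_def numeral_2_eq_2 less_Suc_eq)

lemma cuboid_122: "cuboid x y z 1 2 2 = {(x, y, z), (x, Suc y, z), (x, y, Suc z), (x, Suc y, Suc z)}"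
  by (auto simp: cuboid_def numeral_2_eq_2 less_Suc_eq)

lemma cell_index_neighbours:
  "cell_index (i mod 3) (i div 3) = i" "cell_index (Suc (i mod 3)) (i div 3) = i + 1"
  "cell_index (i mod 3) (Suc (i div 3)) = i + 3" "cell_index (Suc (i mod 3)) (Suc (i div 3)) = i + 4"
  unfolding cell_index_def by simp_all

lemma count_with_flat_brick:
  assumes "i < 12" "i \<notin> U" "\<not> (h = 0 \<and> L \<noteq> {})"
  shows "count_with_brick (layered_box h U L) (cuboid (i mod 3) (i div 3) h 2 2 1) =
    (if i mod 3 < 2 \<and> i div 3 < 3 \<and> i + 1 \<notin> U \<and> i + 3 \<notin> U \<and> i + 4 \<notin> U
     then layered_count h (U \<union> {i, i + 1, i + 3, i + 4}) L else 0)"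
proof -
  define x y where "x = i mod 3" and "y = i div 3"
  note idx = cell_index_neighbours[of i, folded x_def y_def]
  have xy: "x < 3" "y < 4" using assms(1) unfolding x_def y_def by auto
  let ?U' = "U \<union> {i, i + 1, i + 3, i + 4}"
  have fits: "cuboid x y h 2 2 1 \<subseteq> layered_box h U L \<longleftrightarrow>
      x < 2 \<and> y < 3 \<and> i + 1 \<notin> U \<and> i + 3 \<notin> U \<and> i + 4 \<notin> U"
    using xy assms(2) idx unfolding cuboid_221 layered_box_def by auto
  have "layered_box h U L - cuboid x y h 2 2 1 = layered_box h ?U' L" if "x < 2"
  proof -
    have "(a, b, c) \<in> layered_box h U L - cuboid x y h 2 2 1 \<longleftrightarrow> (a, b, c) \<in> layered_box h ?U' L"
      for a b c
      using that idx[symmetric] unfolding cuboid_221 layered_box_def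
      by (cases "a < 3"; cases "c = h") (auto simp: cell_index_eq_iff)
    then show ?thesis by auto
  qed
  with fits assms(3) show ?thesis
    unfolding count_with_brick_def layered_count_def x_def y_def by auto
qed

lemma count_with_brick_along_x:
  assumes "i < 12" "i \<notin> U"
  shows "count_with_brick (layered_box (Suc g) U L) (cuboid (i mod 3) (i div 3) g 2 1 2) =
    (if i mod 3 < 2 \<and> i + 1 \<notin> U \<and> i \<notin> L \<and> i + 1 \<notin> L
     then layered_count (Suc g) (U \<union> {i, i + 1}) (L \<union> {i, i + 1}) else 0)"
proof -
  define x y where "x = i mod 3" and "y = i div 3"
  note idx = cell_index_neighbours[of i, folded x_def y_def]
  have xy: "x < 3" "y < 4" using assms(1) unfolding x_def y_def by auto
  let ?R' = "layered_box (Suc g) (U \<union> {i, i + 1}) (L \<union> {i, i + 1})"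
  have fits: "cuboid x y g 2 1 2 \<subseteq> layered_box (Suc g) U L \<longleftrightarrow>
      x < 2 \<and> i + 1 \<notin> U \<and> i \<notin> L \<and> i + 1 \<notin> L"
    using xy assms(2) idx unfolding cuboid_212 layered_box_def by auto
  have "layered_box (Suc g) U L - cuboid x y g 2 1 2 = ?R'" if "x < 2"
  proof -
    have "(a, b, c) \<in> layered_box (Suc g) U L - cuboid x y g 2 1 2 \<longleftrightarrow> (a, b, c) \<in> ?R'" for a b c
      using that idx[symmetric] unfolding cuboid_212 layered_box_def
      by (cases "a < 3"; cases "c = Suc g"; cases "c = g") (auto simp: cell_index_eq_iff)
    then show ?thesis by auto
  qed
  with fits show ?thesis
    unfolding count_with_brick_def layered_count_def x_def y_def by auto
qed

lemma count_with_brick_along_y: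
  assumes "i < 12" "i \<notin> U"
  shows "count_with_brick (layered_box (Suc g) U L) (cuboid (i mod 3) (i div 3) g 1 2 2) =
    (if i div 3 < 3 \<and> i + 3 \<notin> U \<and> i \<notin> L \<and> i + 3 \<notin> L
     then layered_count (Suc g) (U \<union> {i, i + 3}) (L \<union> {i, i + 3}) else 0)"
proof -
  define x y where "x = i mod 3" and "y = i div 3"
  note idx = cell_index_neighbours[of i, folded x_def y_def]
  have xy: "x < 3" "y < 4" using assms(1) unfolding x_def y_def by auto
  let ?R' = "layered_box (Suc g) (U \<union> {i, i + 3}) (L \<union> {i, i + 3})"
  have fits: "cuboid x y g 1 2 2 \<subseteq> layered_box (Suc g) U L \<longleftrightarrow>
      y < 3 \<and> i + 3 \<notin> U \<and> i \<notin> L \<and> i + 3 \<notin> L"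
    using xy assms(2) idx unfolding cuboid_122 layered_box_def by auto
  have "layered_box (Suc g) U L - cuboid x y g 1 2 2 = ?R'"
  proof -
    have "(a, b, c) \<in> layered_box (Suc g) U L - cuboid x y g 1 2 2 \<longleftrightarrow> (a, b, c) \<in> ?R'" for a b c
      using xy idx[symmetric] unfolding cuboid_122 layered_box_def
      by (cases "a < 3"; cases "c = Suc g"; cases "c = g") (auto simp: cell_index_eq_iff)
    then show ?thesis by auto
  qed
  with fits show ?thesis
    unfolding count_with_brick_def layered_count_def x_def y_def by auto
qed

lemma first_free_cell_layered_box:
  assumes "i < 12" "i \<notin> U" "\<forall>j<i. j \<in> U"
  shows "(i mod 3, i div 3, h) \<in> layered_box h U L"
    and "\<forall>(x, y, z)\<in>layered_box h U L.
           z < h \<or> (z = h \<and> (i div 3 < y \<or> (i div 3 = y \<and> i mod 3 \<le> x)))"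
proof -
  define x0 y0 where "x0 = i mod 3" and "y0 = i div 3"
  have i: "i = cell_index x0 y0" unfolding cell_index_def x0_def y0_def by simp
  have "x0 < 3" "y0 < 4" using assms(1) unfolding x0_def y0_def by auto
  with assms(2) i show "(i mod 3, i div 3, h) \<in> layered_box h U L"
    unfolding layered_box_def x0_def y0_def by auto
  have "z < h \<or> (z = h \<and> (y0 < y \<or> (y0 = y \<and> x0 \<le> x)))"
    if "(x, y, z) \<in> layered_box h U L" for x y z
  proof (cases "z < h")
    case False
    then have "z = h" "x < 3" "\<not> cell_index x y < i"
      using that assms(3) unfolding layered_box_def by auto
    with i \<open>x0 < 3\<close> show ?thesis unfolding cell_index_def by auto
  qed simp
  then show "\<forall>(x, y, z)\<in>layered_box h U L.
      z < h \<or> (z = h \<and> (i div 3 < y \<or> (i div 3 = y \<and> i mod 3 \<le> x)))"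
    unfolding x0_def y0_def by blast
qed

text \<open>Fill the first free cell i of the top layer: the brick covering it lies flat in that layer or
  reaches down into the layer below, along the x or the y axis.\<close>
lemma layered_count_first_free:
  assumes "i < 12" "i \<notin> U" "\<forall>j<i. j \<in> U"
  shows "layered_count h U L =
      (if i mod 3 < 2 \<and> i div 3 < 3 \<and> i + 1 \<notin> U \<and> i + 3 \<notin> U \<and> i + 4 \<notin> U
       then layered_count h (U \<union> {i, i + 1, i + 3, i + 4}) L else 0)
    + (if i mod 3 < 2 \<and> i + 1 \<notin> U \<and> i \<notin> L \<and> i + 1 \<notin> L
       then layered_count h (U \<union> {i, i + 1}) (L \<union> {i, i + 1}) else 0)
    + (if i div 3 < 3 \<and> i + 3 \<notin> U \<and> i \<notin> L \<and> i + 3 \<notin> L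
       then layered_count h (U \<union> {i, i + 3}) (L \<union> {i, i + 3}) else 0)"
proof (cases "h = 0 \<and> L \<noteq> {}")
  case True
  then show ?thesis unfolding layered_count_def by simp
next
  case False
  define x y where "x = i mod 3" and "y = i div 3"
  let ?R = "layered_box h U L"
  have split: "layered_count h U L = (\<Sum>B \<in> corner_bricks x y h. count_with_brick ?R B)"
    using False card_region_tilings_corner[OF finite_layered_box first_free_cell_layered_box[OF assms]]
    unfolding layered_count_def x_def y_def by auto
  show ?thesis
  proof (cases h)
    case 0
    then show ?thesis
      using split count_with_flat_brick[OF assms(1,2) False] False
      unfolding corner_bricks_def x_def y_def layered_count_def by simp
  next
    case (Suc g)
    have "cuboid x y h 2 2 1 \<noteq> cuboid x y g 2 1 2" "cuboid x y h 2 2 1 \<noteq> cuboid x y g 1 2 2"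
      "cuboid x y g 2 1 2 \<noteq> cuboid x y g 1 2 2"
      unfolding Suc cuboid_221 cuboid_212 cuboid_122 by (auto simp: insert_eq_iff)
    then show ?thesis
      using split count_with_flat_brick[OF assms(1,2) False]
        count_with_brick_along_x[OF assms(1,2)] count_with_brick_along_y[OF assms(1,2)]
      unfolding corner_bricks_def x_def y_def Suc by (simp add: add.assoc)
  qed
qed

definition first_free :: "nat set \<Rightarrow> nat" where
  "first_free U = hd (filter (\<lambda>j. j \<notin> U) [0..<12])"

lemma first_free_spec:
  assumes "\<not> set [0..<12] \<subseteq> U"
  shows "first_free U < 12" "first_free U \<notin> U" "\<forall>j < first_free U. j \<in> U"
proof -
  obtain i rest where "filter (\<lambda>j. j \<notin> U) [0..<12] = i # rest"
    using assms by (cases "filter (\<lambda>j. j \<notin> U) [0..<12]") (auto simp: filter_empty_conv)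
  then obtain us vs where split: "[0..<12] = us @ i # vs" and before: "\<forall>u\<in>set us. u \<in> U"
    and "i \<notin> U" and first: "first_free U = i"
    unfolding filter_eq_Cons_iff first_free_def by auto
  have "length us < 12" using arg_cong[OF split, of length] by simp
  moreover have "i = length us"
    using arg_cong[OF split, of "\<lambda>xs. xs ! length us"] \<open>length us < 12\<close> by simp
  moreover have "j \<in> set us" if "j < length us" for j
    using arg_cong[OF split, of "\<lambda>xs. xs ! j"] that \<open>length us < 12\<close>
    by (simp add: nth_append) (metis nth_mem)
  ultimately show "first_free U < 12" "first_free U \<notin> U" "\<forall>j < first_free U. j \<in> U"
    using \<open>i \<notin> U\<close> before first by auto
qed

text \<open>An executable form of layered_count_first_free: on concrete U and L the simplifier unfolds
  it down to profile counts one layer lower.\<close>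
lemma layered_count_step:
  "layered_count h U L =
    (if set [0..<12] \<subseteq> U then profile_count h L else
     let i = first_free U in
      (if i mod 3 < 2 \<and> i div 3 < 3 \<and> i + 1 \<notin> U \<and> i + 3 \<notin> U \<and> i + 4 \<notin> U
       then layered_count h (U \<union> {i, i + 1, i + 3, i + 4}) L else 0)
    + (if i mod 3 < 2 \<and> i + 1 \<notin> U \<and> i \<notin> L \<and> i + 1 \<notin> L
       then layered_count h (U \<union> {i, i + 1}) (L \<union> {i, i + 1}) else 0)
    + (if i div 3 < 3 \<and> i + 3 \<notin> U \<and> i \<notin> L \<and> i + 3 \<notin> L
       then layered_count h (U \<union> {i, i + 3}) (L \<union> {i, i + 3}) else 0))"
  using layered_count_full_layer[of U h L] layered_count_first_free[OF first_free_spec, of U h L]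
  by (simp add: Let_def)

section \<open>The transfer matrix\<close>

text \<open>The profiles reachable from the empty one.\<close>
definition profiles :: "nat set list" where
  "profiles =
    [{}, {0, 1, 3, 4}, {0, 1, 9, 10}, {1, 2, 4, 5}, {1, 2, 10, 11},
     {3, 4, 6, 7}, {4, 5, 7, 8}, {6, 7, 9, 10}, {7, 8, 10, 11},
     {0, 1, 3, 4, 6, 7, 9, 10}, {0, 1, 3, 4, 7, 8, 10, 11},
     {1, 2, 4, 5, 6, 7, 9, 10}, {1, 2, 4, 5, 7, 8, 10, 11}, {0, 3, 6, 9},
     {0, 3, 8, 11}, {2, 5, 6, 9}, {2, 5, 8, 11}, {0, 1, 2, 3, 4, 5, 6, 9},
     {0, 1, 2, 3, 4, 5, 8, 11}, {0, 1, 2, 3, 6, 9, 10, 11},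
     {0, 1, 2, 5, 8, 9, 10, 11}, {0, 3, 4, 5, 6, 7, 8, 9},
     {0, 3, 6, 7, 8, 9, 10, 11}, {2, 3, 4, 5, 6, 7, 8, 11},
     {2, 5, 6, 7, 8, 9, 10, 11}, {0, 1, 2, 3, 4, 5, 6, 7, 8, 9, 10, 11}]"

text \<open>The transfer matrix, stored column by column: transfer ! j ! i is the number of ways to cover
  the top layer of a box with profile profiles ! i such that exactly the cells of profiles ! j in
  the layer below are covered along the way.\<close>
definition transfer :: "nat list list" where
  "transfer =
    [[0, 0, 0, 0, 0, 0, 0, 0, 0, 0, 0, 0, 0, 1, 1, 1, 1, 1, 1, 1, 1, 0, 1, 0, 1, 1],
     [0, 0, 0, 0, 0, 0, 0, 0, 0, 0, 0, 0, 0, 0, 0, 2, 2, 0, 0, 0, 0, 0, 0, 0, 2, 0],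
     [0, 0, 0, 0, 0, 0, 0, 0, 0, 0, 0, 0, 0, 0, 0, 0, 1, 0, 0, 0, 0, 0, 0, 1, 0, 0],
     [0, 0, 0, 0, 0, 0, 0, 0, 0, 0, 0, 0, 0, 2, 2, 0, 0, 0, 0, 0, 0, 0, 2, 0, 0, 0],
     [0, 0, 0, 0, 0, 0, 0, 0, 0, 0, 0, 0, 0, 1, 0, 0, 0, 0, 0, 0, 0, 1, 0, 0, 0, 0],
     [0, 0, 0, 0, 0, 0, 0, 0, 0, 0, 0, 0, 0, 0, 0, 0, 0, 0, 0, 0, 2, 0, 0, 0, 0, 0],
     [0, 0, 0, 0, 0, 0, 0, 0, 0, 0, 0, 0, 0, 0, 0, 0, 0, 0, 0, 2, 0, 0, 0, 0, 0, 0],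
     [0, 0, 0, 0, 0, 0, 0, 0, 0, 0, 0, 0, 0, 0, 2, 0, 2, 0, 2, 0, 0, 0, 0, 0, 0, 0],
     [0, 0, 0, 0, 0, 0, 0, 0, 0, 0, 0, 0, 0, 2, 0, 2, 0, 2, 0, 0, 0, 0, 0, 0, 0, 0],
     [0, 0, 0, 0, 0, 0, 0, 0, 0, 0, 0, 0, 0, 0, 0, 0, 5, 0, 0, 0, 0, 0, 0, 0, 0, 0],
     [0, 0, 0, 0, 0, 0, 0, 0, 0, 0, 0, 0, 0, 0, 0, 4, 0, 0, 0, 0, 0, 0, 0, 0, 0, 0],
     [0, 0, 0, 0, 0, 0, 0, 0, 0, 0, 0, 0, 0, 0, 4, 0, 0, 0, 0, 0, 0, 0, 0, 0, 0, 0],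
     [0, 0, 0, 0, 0, 0, 0, 0, 0, 0, 0, 0, 0, 5, 0, 0, 0, 0, 0, 0, 0, 0, 0, 0, 0, 0],
     [1, 0, 0, 1, 1, 0, 0, 0, 1, 0, 0, 0, 1, 0, 0, 0, 0, 0, 0, 0, 0, 0, 0, 0, 0, 0],
     [1, 0, 0, 1, 0, 0, 0, 1, 0, 0, 0, 1, 0, 0, 0, 0, 0, 0, 0, 0, 0, 0, 0, 0, 0, 0],
     [1, 1, 0, 0, 0, 0, 0, 0, 1, 0, 1, 0, 0, 0, 0, 0, 0, 0, 0, 0, 0, 0, 0, 0, 0, 0],
     [1, 1, 1, 0, 0, 0, 0, 1, 0, 1, 0, 0, 0, 0, 0, 0, 0, 0, 0, 0, 0, 0, 0, 0, 0, 0],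
     [3, 0, 0, 0, 0, 0, 0, 0, 3, 0, 0, 0, 0, 0, 0, 0, 0, 0, 0, 0, 0, 0, 0, 0, 0, 0],
     [3, 0, 0, 0, 0, 0, 0, 3, 0, 0, 0, 0, 0, 0, 0, 0, 0, 0, 0, 0, 0, 0, 0, 0, 0, 0],
     [1, 0, 0, 0, 0, 0, 1, 0, 0, 0, 0, 0, 0, 0, 0, 0, 0, 0, 0, 0, 0, 0, 0, 0, 0, 0],
     [1, 0, 0, 0, 0, 1, 0, 0, 0, 0, 0, 0, 0, 0, 0, 0, 0, 0, 0, 0, 0, 0, 0, 0, 0, 0],
     [0, 0, 0, 0, 2, 0, 0, 0, 0, 0, 0, 0, 0, 0, 0, 0, 0, 0, 0, 0, 0, 0, 0, 0, 0, 0],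
     [3, 0, 0, 3, 0, 0, 0, 0, 0, 0, 0, 0, 0, 0, 0, 0, 0, 0, 0, 0, 0, 0, 0, 0, 0, 0],
     [0, 0, 2, 0, 0, 0, 0, 0, 0, 0, 0, 0, 0, 0, 0, 0, 0, 0, 0, 0, 0, 0, 0, 0, 0, 0],
     [3, 3, 0, 0, 0, 0, 0, 0, 0, 0, 0, 0, 0, 0, 0, 0, 0, 0, 0, 0, 0, 0, 0, 0, 0, 0],
     [11, 0, 0, 0, 0, 0, 0, 0, 0, 0, 0, 0, 0, 0, 0, 0, 0, 0, 0, 0, 0, 0, 0, 0, 0, 0]]"

lemma upt_0_12: "[0..<12] = [0, 1, 2, 3, 4, 5, 6, 7, 8, 9, 10, 11 :: nat]"
  by (simp add: upt_rec)

lemma sum_lessThan_conv_sum_list: "(\<Sum>i<n. f i) = (\<Sum>i\<leftarrow>[0..<n]. f i)"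
  by (simp add: interv_sum_list_conv_sum_set_nat atLeast0LessThan)

lemma upt_0_26: "[0..<26] = [0, 1, 2, 3, 4, 5, 6, 7, 8, 9, 10, 11, 12, 13, 14, 15, 16, 17, 18, 19, 20,
    21, 22, 23, 24, 25 :: nat]"
  by (simp add: upt_rec)

lemma profile_count_Suc_transfer:
  assumes "i < 26"
  shows "profile_count (Suc h) (profiles ! i) = (\<Sum>j<26. transfer ! j ! i * profile_count h (profiles ! j))"
proof -
  have "\<forall>i\<in>set [0..<26]. profile_count (Suc h) (profiles ! i) =
      (\<Sum>j<26. transfer ! j ! i * profile_count h (profiles ! j))"
    unfolding profiles_def transfer_def sum_lessThan_conv_sum_list upt_0_26
    by (simp add: profile_count_Suc layered_count_step first_free_def upt_0_12
        Let_def insert_commute numeral_2_eq_2[symmetric] cong: if_weak_cong)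
  then show ?thesis using assms by simp
qed

text \<open>Row 0 of the k-th power of the transfer matrix, computed by vector-matrix products so that
  the simplifier evaluates it in time linear in k.\<close>
primrec transfer_row :: "nat \<Rightarrow> nat list" where
  "transfer_row 0 = map (\<lambda>j. of_bool (j = 0)) [0..<26]"
| "transfer_row (Suc k) = map (\<lambda>col. sum_list (map2 (*) (transfer_row k) col)) transfer"

lemma length_transfer: "length transfer = 26" "\<forall>col\<in>set transfer. length col = 26"
  by (simp_all add: transfer_def)

lemma length_transfer_row: "length (transfer_row k) = 26"
  by (cases k) (simp_all add: length_transfer)

lemma sum_list_map2_times:
  "length xs = length ys \<Longrightarrow> sum_list (map2 (*) xs ys) = (\<Sum>i<length xs. xs ! i * ys ! i)"
  by (simp add: sum_list_sum_nth atLeast0LessThan)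

lemma transfer_row_Suc_nth:
  "j < 26 \<Longrightarrow> transfer_row (Suc k) ! j = (\<Sum>i<26. transfer_row k ! i * transfer ! j ! i)"
  using length_transfer by (simp add: sum_list_map2_times length_transfer_row)

lemma profiles_empty_iff: "j < 26 \<Longrightarrow> profiles ! j = {} \<longleftrightarrow> j = 0"
proof -
  have "\<forall>j\<in>{..<26}. profiles ! j = {} \<longleftrightarrow> j = 0"
    unfolding profiles_def by (simp add: lessThan_nat_numeral)
  then show "j < 26 \<Longrightarrow> profiles ! j = {} \<longleftrightarrow> j = 0" by simp
qed

lemma profile_count_0: "profile_count 0 S = of_bool (S = {})"
proof -
  have "profile_box 0 S' = {}" for S' unfolding profile_box_def by simp
  then show ?thesis unfolding profile_count_def by (simp add: region_tilings_empty)
qed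

lemma profile_count_add_eq_transfer_row:
  "profile_count (h + k) {} = (\<Sum>j<26. transfer_row k ! j * profile_count h (profiles ! j))"
proof (induction k arbitrary: h)
  case 0
  have "(\<Sum>j<26. transfer_row 0 ! j * profile_count h (profiles ! j)) =
      (\<Sum>j<26. if j = 0 then profile_count h (profiles ! j) else 0)"
    by (intro sum.cong) auto
  also have "\<dots> = profile_count h {}"
    using profiles_empty_iff[of 0] by simp
  finally show ?case by simp
next
  case (Suc k)
  have "profile_count (h + Suc k) {} =
      (\<Sum>i<26. transfer_row k ! i * (\<Sum>j<26. transfer ! j ! i * profile_count h (profiles ! j)))"
    using Suc.IH[of "Suc h"] by (simp add: profile_count_Suc_transfer)
  also have "\<dots> = (\<Sum>j<26. (\<Sum>i<26. transfer_row k ! i * transfer ! j ! i) * profile_count h (profiles ! j))"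
    unfolding sum_distrib_left sum_distrib_right mult.assoc by (rule sum.swap)
  also have "\<dots> = (\<Sum>j<26. transfer_row (Suc k) ! j * profile_count h (profiles ! j))"
    by (intro sum.cong) (simp_all add: transfer_row_Suc_nth del: transfer_row.simps)
  finally show ?case .
qed

lemma profile_count_eq_transfer_row: "profile_count k {} = transfer_row k ! 0"
proof -
  have "profile_count (0 + k) {} = (\<Sum>j<26. if j = 0 then transfer_row k ! j else 0)"
    unfolding profile_count_add_eq_transfer_row profile_count_0 using profiles_empty_iff by (intro sum.cong) auto
  then show ?thesis by simp
qed

lemma transfer_row_numeral:
  "transfer_row (numeral n) =
     map (\<lambda>col. sum_list (map2 (*) (transfer_row (pred_numeral n)) col)) transfer"
  by (simp add: numeral_eq_Suc)

lemma transfer_row_recurrence: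
  assumes "j < 26"
  shows "transfer_row 10 ! j + 700 * transfer_row 6 ! j + 5180 * transfer_row 2 ! j =
    55 * transfer_row 8 ! j + 3186 * transfer_row 4 ! j + 2640 * transfer_row 0 ! j"
proof -
  have "\<forall>j\<in>set [0..<26]. transfer_row 10 ! j + 700 * transfer_row 6 ! j + 5180 * transfer_row 2 ! j =
    55 * transfer_row 8 ! j + 3186 * transfer_row 4 ! j + 2640 * transfer_row 0 ! j"
    by (simp add: transfer_row_numeral transfer_def upt_0_26)
  with assms show ?thesis by simp
qed

lemma profile_count_empty_values:
  "profile_count 0 {} = 1" "profile_count 1 {} = 0" "profile_count 2 {} = 29"
  "profile_count 3 {} = 0" "profile_count 4 {} = 1065" "profile_count 5 {} = 0"
  "profile_count 6 {} = 41097" "profile_count 7 {} = 0" "profile_count 8 {} = 1602289"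
  "profile_count 9 {} = 0"
  unfolding profile_count_eq_transfer_row
  by (simp_all add: transfer_row_numeral transfer_def upt_0_26)

lemma profile_count_empty_recurrence:
  "profile_count (h + 10) {} + 700 * profile_count (h + 6) {} + 5180 * profile_count (h + 2) {} =
   55 * profile_count (h + 8) {} + 3186 * profile_count (h + 4) {} + 2640 * profile_count h {}"
proof -
  let ?c = "\<lambda>j. profile_count h (profiles ! j)"
  have "profile_count (h + 10) {} + 700 * profile_count (h + 6) {} + 5180 * profile_count (h + 2) {} =
      (\<Sum>j<26. (transfer_row 10 ! j + 700 * transfer_row 6 ! j + 5180 * transfer_row 2 ! j) * ?c j)"
    unfolding profile_count_add_eq_transfer_row by (simp add: sum.distrib sum_distrib_left algebra_simps)
  also have "\<dots> =
      (\<Sum>j<26. (55 * transfer_row 8 ! j + 3186 * transfer_row 4 ! j + 2640 * transfer_row 0 ! j) * ?c j)"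
    using transfer_row_recurrence by (intro sum.cong) auto
  also have "\<dots> =
      55 * profile_count (h + 8) {} + 3186 * profile_count (h + 4) {} + 2640 * profile_count (h + 0) {}"
    unfolding profile_count_add_eq_transfer_row by (simp add: sum.distrib sum_distrib_left algebra_simps)
  finally show ?thesis by simp
qed

lemma T_multiple_of_3:
  assumes "3 dvd N"
  shows "T N = profile_count (N div 3) {}"
proof -
  define n where "n = N div 3"
  let ?box = "cuboid 0 0 0 3 4 n"
  have "card ?box = 12 * n" by (simp add: cuboid_eq_product card_cartesian_product)
  then have "card P = N" if "P \<in> region_tilings 1 2 2 ?box" for P
    using card_region_eq_card_tiling[OF _ that] assms unfolding n_def
    by (simp add: cuboid_eq_product)
  then have "{P \<in> tilings 1 2 2 3 4 n. card P = N} = region_tilings 1 2 2 ?box"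
    unfolding tilings_eq_region_tilings by blast
  moreover have "profile_box n {} = ?box" unfolding profile_box_def cuboid_def by auto
  ultimately show ?thesis
    using assms unfolding T_def profile_count_def n_def by simp
qed

lemma T_not_multiple_of_3: "\<not> 3 dvd N \<Longrightarrow> T N = 0"
  by (simp add: T_def)

lemma T_recurrence:
  assumes "30 \<le> n"
  shows "T n + 700 * T (n - 12) + 5180 * T (n - 24) =
    55 * T (n - 6) + 3186 * T (n - 18) + 2640 * T (n - 30)"
proof (cases "3 dvd n")
  case True
  then obtain m where m: "n = 3 * m" by blast
  define h where "h = m - 10"
  have n: "n = 3 * (h + 10)" using m assms unfolding h_def by simp
  have T_3: "T (3 * k) = profile_count k {}" for k by (simp add: T_multiple_of_3)
  have "n - 6 = 3 * (h + 8)" "n - 12 = 3 * (h + 6)" "n - 18 = 3 * (h + 4)" "n - 24 = 3 * (h + 2)"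
    "n - 30 = 3 * h" using n by simp_all
  with n show ?thesis by (simp only: T_3 profile_count_empty_recurrence)
next
  case False
  have "T (n - 6 * k) = 0" if "6 * k \<le> n" for k
  proof -
    have "\<not> 3 dvd n - 6 * k"
    proof
      assume "3 dvd n - 6 * k"
      moreover have "3 dvd 6 * k" by (rule dvd_mult2) simp
      ultimately have "3 dvd n - 6 * k + 6 * k" by (rule dvd_add)
      with False that show False by simp
    qed
    then show ?thesis by (rule T_not_multiple_of_3)
  qed
  from this[of 0] this[of 1] this[of 2] this[of 3] this[of 4] this[of 5] assms show ?thesis by simp
qed

section \<open>The generating function\<close>

lemma fps_nth_numeral_X_power_mult:
  "fps_nth (numeral c * fps_X ^ k * f :: 'a::comm_ring_1 fps) n =
    (if n < k then 0 else numeral c * fps_nth f (n - k))"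
  by (simp add: numeral_fps_const fps_X_power_mult_nth mult.assoc)

lemma fps_nth_numeral_X_power:
  "fps_nth (numeral c * fps_X ^ k :: 'a::comm_ring_1 fps) n = (if n = k then numeral c else 0)"
  by (simp add: numeral_fps_const)

lemma upt_0_30: "[0..<30] = [0, 1, 2, 3, 4, 5, 6, 7, 8, 9, 10, 11, 12, 13, 14, 15, 16, 17, 18, 19, 20,
    21, 22, 23, 24, 25, 26, 27, 28, 29 :: nat]"
  by (simp add: upt_rec)

lemma T_fps_times_denominator:
  "(1 - 55 * fps_X ^ 6 + 700 * fps_X ^ 12 - 3186 * fps_X ^ 18 + 5180 * fps_X ^ 24 - 2640 * fps_X ^ 30)
     * Abs_fps (\<lambda>N. of_nat (T N) :: rat)
   = 1 - 26 * fps_X ^ 6 + 170 * fps_X ^ 12 - 364 * fps_X ^ 18 + 240 * fps_X ^ 24"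
  (is "?Q * ?A = ?P")
proof (rule fps_ext)
  fix n
  have "?Q * ?A = ?A - 55 * fps_X ^ 6 * ?A + 700 * fps_X ^ 12 * ?A - 3186 * fps_X ^ 18 * ?A
      + 5180 * fps_X ^ 24 * ?A - 2640 * fps_X ^ 30 * ?A"
    by algebra
  then have lhs: "fps_nth (?Q * ?A) n = of_nat (T n) - (if n < 6 then 0 else 55 * of_nat (T (n - 6)))
      + (if n < 12 then 0 else 700 * of_nat (T (n - 12))) - (if n < 18 then 0 else 3186 * of_nat (T (n - 18)))
      + (if n < 24 then 0 else 5180 * of_nat (T (n - 24))) - (if n < 30 then 0 else 2640 * of_nat (T (n - 30)))"
    by (simp only: fps_add_nth fps_sub_nth fps_nth_numeral_X_power_mult fps_nth_Abs_fps)
  have rhs: "fps_nth ?P n = (if n = 0 then 1 else 0) - (if n = 6 then 26 else 0) + (if n = 12 then 170 else 0)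
      - (if n = 18 then 364 else 0) + (if n = 24 then 240 else 0)"
    by (simp only: fps_add_nth fps_sub_nth fps_nth_numeral_X_power fps_one_nth)
  show "fps_nth (?Q * ?A) n = fps_nth ?P n"
  proof (cases "30 \<le> n")
    case True
    have "rat_of_nat (T n + 700 * T (n - 12) + 5180 * T (n - 24)) =
        of_nat (55 * T (n - 6) + 3186 * T (n - 18) + 2640 * T (n - 30))"
      using T_recurrence[OF True] by (rule arg_cong)
    with True show ?thesis unfolding lhs rhs by simp
  next
    case False
    then have "n \<in> set [0..<30]" by simp
    then show ?thesis unfolding lhs rhs upt_0_30
      by (auto simp: T_multiple_of_3 T_not_multiple_of_3 profile_count_empty_values
          profile_count_empty_values(2)[unfolded One_nat_def])
  qed
qed

theorem mainTheorem17:
  shows "Abs_fps (\<lambda>N. of_nat (T N) :: rat) =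
    ((1 - 2 * fps_X ^ 6) * (1 - 24 * fps_X ^ 6 + 122 * fps_X ^ 12 - 120 * fps_X ^ 18)) /
    ((1 - fps_X ^ 6) * (1 - 54 * fps_X ^ 6 + 646 * fps_X ^ 12 - 2540 * fps_X ^ 18 + 2640 * fps_X ^ 24))"
proof -
  let ?Q = "1 - 55 * fps_X ^ 6 + 700 * fps_X ^ 12 - 3186 * fps_X ^ 18 + 5180 * fps_X ^ 24 - 2640 * fps_X ^ 30 :: rat fps"
  have num: "(1 - 2 * fps_X ^ 6) * (1 - 24 * fps_X ^ 6 + 122 * fps_X ^ 12 - 120 * fps_X ^ 18) =
      (1 - 26 * fps_X ^ 6 + 170 * fps_X ^ 12 - 364 * fps_X ^ 18 + 240 * fps_X ^ 24 :: rat fps)"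
    by algebra
  have den: "(1 - fps_X ^ 6) * (1 - 54 * fps_X ^ 6 + 646 * fps_X ^ 12 - 2540 * fps_X ^ 18 + 2640 * fps_X ^ 24) = ?Q"
    by algebra
  have "fps_nth ?Q 0 = 1" by (simp add: numeral_fps_const)
  then have "?Q \<noteq> 0" by (metis fps_zero_nth zero_neq_one)
  then show ?thesis unfolding num den T_fps_times_denominator[symmetric] by simp
qed

end
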